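(* Let $\omega$ be a primitive substitution rule in $\mathbb{R}^d$ with finite local complexity whose expansion map is $Q=\lambda I$, where the expansion factor $\lambda$ is an irrational Pisot number. Let $\mathcal{T}$ be a tiling with $\omega(\mathcal{T})=\mathcal{T}$ (a fixed point of $\omega$), and assume $\mathcal{T}$ is repetitive. Then for every nonempty finite $\mathcal{T}$-legal patch $\mathcal{P}$ and every $v\in\mathbb{R}^d\setminus\{0\}$ there is $n_0\in\mathbb{N}$ such that the patch $\bigcup_{n=0}^{n_0}(\mathcal{P}+nv)$ is not $\mathcal{T}$-legal.
   Context: A tile in $\mathbb{R}^d$ is a compact set equal to the closure of its interior, possibly carrying a label from a fixed finite set; $T+x$ denotes the translate (same label). A patch is a set of tiles any two distinct members of which have disjoint interiors; its support is the closure of the union of the supports of its tiles; $\mathcal{P}+x=\{T+x: T\in\mathcal{P}\}$. A tiling is a patch whose support is $\mathbb{R}^d$. A patch $\mathcal{P}$ is $\mathcal{T}$-legal if $\mathcal{P}+x\subset\mathcal{T}$ for some $x\in\mathbb{R}^d$. $\mathcal{T}$ is repetitive if for every finite $\mathcal{T}$-legal patch $\mathcal{P}$ there is $R>0$ such that every ball of radius $R$ contains the support of some translate $\mathcal{P}+x\subset\mathcal{T}$. For a patch $\mathcal{P}$ and $S\subset\mathbb{R}^d$, $\mathcal{P}\sqcap S=\{T\in\mathcal{P}:\operatorname{supp}T\cap S\neq\emptyset\}$. A substitution rule consists of a finite set $\mathcal{A}$ of tiles (prototiles), a linear map $Q$ of $\mathbb{R}^d$ all of whose eigenvalues have modulus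 $>1$, and a map $\omega$ assigning to each $P\in\mathcal{A}$ a finite patch $\omega(P)$ of translates of elements of $\mathcal{A}$ with $\operatorname{supp}\omega(P)=Q(\operatorname{supp}P)$; it is extended by $\omega(P+x)=\omega(P)+Qx$ and to patches of translates of prototiles by taking unions. With $\mathcal{A}=\{T_1,\dots,T_m\}$, the substitution matrix has $(i,j)$ entry the number of translates of $T_i$ in $\omega(T_j)$; $\omega$ is primitive if some power of this matrix has all entries positive. $\omega$ has finite local complexity if for each compact $K$ the set $\{\omega^n(P)\sqcap(K+x): n>0, P\in\mathcal{A}, x\in\mathbb{R}^d\}$ is finite up to translation. A Pisot number is a real algebraic integer $>1$ all of whose other algebraic conjugates have modulus $<1$. *)

theory Defs
  imports "HOL-Analysis.Analysis" "HOL-Computational_Algebra.Polynomial"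
begin

type_synonym ('a, 'l) tile = "'a set \<times> 'l"

definition is_tile :: "('a::euclidean_space, 'l) tile \<Rightarrow> bool" where
  "is_tile T \<longleftrightarrow> compact (fst T) \<and> fst T = closure (interior (fst T))"

definition ttrans :: "('a::euclidean_space, 'l) tile \<Rightarrow> 'a \<Rightarrow> ('a, 'l) tile" where
  "ttrans T x = ((\<lambda>y. y + x) ` fst T, snd T)"

definition ptrans :: "('a::euclidean_space, 'l) tile set \<Rightarrow> 'a \<Rightarrow> ('a, 'l) tile set" where
  "ptrans P x = (\<lambda>T. ttrans T x) ` P"

definition is_patch :: "('a::euclidean_space, 'l) tile set \<Rightarrow> bool" where
  "is_patch P \<longleftrightarrow> (\<forall>T\<in>P. is_tile T) \<and>
     (\<forall>T\<in>P. \<forall>T'\<in>P. T \<noteq> T' \<longrightarrow> interior (fst T) \<inter> interior (fst T') = {})"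

definition supp :: "('a::euclidean_space, 'l) tile set \<Rightarrow> 'a set" where
  "supp P = closure (\<Union>T\<in>P. fst T)"

definition is_tiling :: "('a::euclidean_space, 'l) tile set \<Rightarrow> bool" where
  "is_tiling P \<longleftrightarrow> is_patch P \<and> supp P = UNIV"

definition legal :: "('a::euclidean_space, 'l) tile set \<Rightarrow> ('a, 'l) tile set \<Rightarrow> bool" where
  "legal \<T> P \<longleftrightarrow> (\<exists>x. ptrans P x \<subseteq> \<T>)"

definition repetitive :: "('a::euclidean_space, 'l) tile set \<Rightarrow> bool" where
  "repetitive \<T> \<longleftrightarrow> (\<forall>P. finite P \<and> legal \<T> P \<longrightarrow>
     (\<exists>R>0. \<forall>c. \<exists>x. ptrans P x \<subseteq> \<T> \<and> supp (ptrans P x) \<subseteq> ball c R))"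

definition patch_restr :: "('a::euclidean_space, 'l) tile set \<Rightarrow> 'a set \<Rightarrow> ('a, 'l) tile set" where
  "patch_restr P S = {T\<in>P. fst T \<inter> S \<noteq> {}}"

text \<open>Substitution with expansion map \<open>Q = \<lambda> I\<close>: prototile set \<open>A\<close>, scalar \<open>lam\<close>,
  and \<open>\<omega>\<close> giving the image patch of each prototile.\<close>

definition translates_of :: "('a::euclidean_space, 'l) tile set \<Rightarrow> ('a, 'l) tile set" where
  "translates_of A = {ttrans P x | P x. P \<in> A}"

text \<open>Extension to translates of prototiles: \<open>\<omega>(P + x) = \<omega>(P) + Q x\<close>.\<close>
definition subst_tile ::
  "('a::euclidean_space, 'l) tile set \<Rightarrow> real \<Rightarrow> (('a, 'l) tile \<Rightarrow> ('a, 'l) tile set)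
     \<Rightarrow> ('a, 'l) tile \<Rightarrow> ('a, 'l) tile set" where
  "subst_tile A lam \<omega> S = \<Union>{ptrans (\<omega> P) (lam *\<^sub>R x) | P x. P \<in> A \<and> S = ttrans P x}"

definition subst_patch ::
  "('a::euclidean_space, 'l) tile set \<Rightarrow> real \<Rightarrow> (('a, 'l) tile \<Rightarrow> ('a, 'l) tile set)
     \<Rightarrow> ('a, 'l) tile set \<Rightarrow> ('a, 'l) tile set" where
  "subst_patch A lam \<omega> \<P> = (\<Union>S\<in>\<P>. subst_tile A lam \<omega> S)"

definition subst_rule ::
  "('a::euclidean_space, 'l) tile set \<Rightarrow> real \<Rightarrow> (('a, 'l) tile \<Rightarrow> ('a, 'l) tile set) \<Rightarrow> bool" where
  "subst_rule A lam \<omega> \<longleftrightarrow>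
     finite A \<and> (\<forall>P\<in>A. is_tile P) \<and> \<bar>lam\<bar> > 1 \<and>
     (\<forall>P\<in>A. finite (\<omega> P) \<and> is_patch (\<omega> P) \<and> \<omega> P \<subseteq> translates_of A \<and>
              supp (\<omega> P) = (\<lambda>y. lam *\<^sub>R y) ` fst P) \<and>
     \<comment> \<open>well-definedness of the extension \<open>\<omega>(P + x) = \<omega>(P) + Q x\<close>\<close>
     (\<forall>P\<in>A. \<forall>P'\<in>A. \<forall>x y. ttrans P x = ttrans P' y \<longrightarrow>
              ptrans (\<omega> P) (lam *\<^sub>R x) = ptrans (\<omega> P') (lam *\<^sub>R y))"

definition subst_matrix ::
  "(('a::euclidean_space, 'l) tile \<Rightarrow> ('a, 'l) tile set) \<Rightarrow> ('a, 'l) tile \<Rightarrow> ('a, 'l) tile \<Rightarrow> nat" where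
  "subst_matrix \<omega> Ti Tj = card {x. ttrans Ti x \<in> \<omega> Tj}"

fun mat_pow ::
  "('b set) \<Rightarrow> ('b \<Rightarrow> 'b \<Rightarrow> nat) \<Rightarrow> nat \<Rightarrow> 'b \<Rightarrow> 'b \<Rightarrow> nat" where
  "mat_pow I M 0 = (\<lambda>i j. if i = j then 1 else 0)"
| "mat_pow I M (Suc n) = (\<lambda>i j. \<Sum>k\<in>I. M i k * mat_pow I M n k j)"

definition primitive ::
  "('a::euclidean_space, 'l) tile set \<Rightarrow> (('a, 'l) tile \<Rightarrow> ('a, 'l) tile set) \<Rightarrow> bool" where
  "primitive A \<omega> \<longleftrightarrow>
     (\<exists>n\<ge>1. \<forall>Ti\<in>A. \<forall>Tj\<in>A. mat_pow A (subst_matrix \<omega>) n Ti Tj > 0)"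

definition finite_up_to_translation :: "('a::euclidean_space, 'l) tile set set \<Rightarrow> bool" where
  "finite_up_to_translation S \<longleftrightarrow>
     (\<exists>F. finite F \<and> (\<forall>\<P>\<in>S. \<exists>\<P>'\<in>F. \<exists>y. \<P> = ptrans \<P>' y))"

definition FLC ::
  "('a::euclidean_space, 'l) tile set \<Rightarrow> real \<Rightarrow> (('a, 'l) tile \<Rightarrow> ('a, 'l) tile set) \<Rightarrow> bool" where
  "FLC A lam \<omega> \<longleftrightarrow> (\<forall>K. compact K \<longrightarrow> finite_up_to_translation
     {patch_restr ((subst_patch A lam \<omega> ^^ n) {P}) ((\<lambda>y. y + x) ` K) | n P x.
        n > 0 \<and> P \<in> A})"

definition pisot :: "real \<Rightarrow> bool" where
  "pisot lam \<longleftrightarrow> lam > 1 \<and>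
     (\<exists>p :: int poly. lead_coeff p = 1 \<and> irreducible p \<and>
        poly (map_poly real_of_int p) lam = 0 \<and>
        (\<forall>z::complex. poly (map_poly complex_of_int p) z = 0 \<and> z \<noteq> complex_of_real lam
            \<longrightarrow> cmod z < 1))"

end

theory Submission
  imports Defs "HOL-Computational_Algebra.Fundamental_Theorem_Algebra"
    "HOL-Computational_Algebra.Polynomial_Factorial"
begin

text \<open>
  Since \<open>\<lambda>\<close> is an irrational Pisot number, its minimal polynomial \<open>p\<close> has a root \<open>z \<noteq> \<lambda>\<close>
  with \<open>|z| < 1\<close>; write \<open>p = (X - z) q\<close>. The vectors \<open>\<lambda>\<^sup>j v\<close> with \<open>j < deg p\<close> are linearly
  independent over \<open>\<rat>\<close>, so some additive \<open>h : \<real>\<^sup>d \<rightarrow> \<real>\<close> vanishes on all of them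
  except \<open>h (\<lambda>\<^sup>k v) = 1\<close> for \<open>k = deg q\<close>. Then \<open>\<psi> u = \<Sum>\<^sub>j q\<^sub>j h (\<lambda>\<^sup>j u)\<close> is additive
  with \<open>\<psi> v = 1\<close> and \<open>\<psi> (\<lambda> u) = z \<psi> u\<close>, the defect being \<open>h (p(\<lambda>) u) = 0\<close>.

  Because \<open>\<omega>(\<T>) = \<T>\<close>, every control point \<open>s\<close> (a translation vector of a tile of \<open>\<T>\<close>) is
  \<open>\<lambda> x + e\<close> with \<open>x\<close> a control point of norm about \<open>|s| / \<lambda>\<close> and \<open>e\<close> from a finite set of
  digits, so \<open>|\<psi> s| \<le> |z| |\<psi> x| + M\<close>. Descending to the finitely many control points near
  the origin shows that \<open>\<psi>\<close> is bounded on control points. If the patch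
  \<open>\<P> \<union> (\<P> + v) \<union> \<dots> \<union> (\<P> + n\<^sub>0 v)\<close> were legal, then \<open>t\<close> and \<open>t + n\<^sub>0 v\<close> would be control
  points for some \<open>t\<close>, although \<open>\<psi> (t + n\<^sub>0 v) - \<psi> t = n\<^sub>0 \<psi> v\<close> is unbounded in \<open>n\<^sub>0\<close>.
\<close>

section \<open>Integer polynomials with a Pisot root\<close>

lemma map_poly_of_int_mult:
  "map_poly (of_int :: int \<Rightarrow> 'a::comm_ring_1) (f * g) = map_poly of_int f * map_poly of_int g"
  by (intro poly_eqI) (simp add: coeff_map_poly coeff_mult)

lemma map_poly_of_int_diff:
  "map_poly (of_int :: int \<Rightarrow> 'a::comm_ring_1) (f - g) = map_poly of_int f - map_poly of_int g"
  by (intro poly_eqI) (simp add: coeff_map_poly)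

lemma map_poly_of_int_smult:
  "map_poly (of_int :: int \<Rightarrow> 'a::comm_ring_1) (smult a f) = smult (of_int a) (map_poly of_int f)"
  by (intro poly_eqI) (simp add: coeff_map_poly)

lemma pderiv_map_poly_of_int:
  "pderiv (map_poly (of_int :: int \<Rightarrow> 'a::{comm_ring_1, semiring_no_zero_divisors}) f) =
     map_poly of_int (pderiv f)"
  by (intro poly_eqI) (simp add: coeff_pderiv coeff_map_poly)

lemma poly_map_poly_of_int_of_real:
  "poly (map_poly of_int f) (of_real x :: 'a::{real_algebra_1, comm_ring_1}) =
     of_real (poly (map_poly of_int f) x)"
  by (simp add: poly_altdef degree_map_poly coeff_map_poly)

lemma irreducible_root_degree_le:
  fixes p b :: "int poly" and x :: "'a::{idom, ring_char_0}"
  assumes irr: "irreducible p" and p_root: "poly (map_poly of_int p) x = 0"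
    and "b \<noteq> 0" and "poly (map_poly of_int b) x = 0"
  shows "degree p \<le> degree b"
proof -
  obtain b0 where b0: "b0 \<noteq> 0" "poly (map_poly of_int b0) x = 0"
    and b0_min: "\<And>c. c \<noteq> 0 \<Longrightarrow> poly (map_poly of_int c) x = 0 \<Longrightarrow> degree b0 \<le> degree c"
    using ex_has_least_nat[of "\<lambda>c. c \<noteq> 0 \<and> poly (map_poly of_int c) x = 0" b degree] assms(3,4)
    by blast
  obtain a q where a: "a \<noteq> 0" and div: "smult a p = b0 * q + pseudo_mod p b0"
    using pseudo_mod(1)[OF b0(1)] by blast
  have "pseudo_mod p b0 = smult a p - b0 * q" using div by simp
  then have "poly (map_poly of_int (pseudo_mod p b0)) x = 0"
    using p_root b0(2) by (simp add: map_poly_of_int_diff map_poly_of_int_mult map_poly_of_int_smult)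
  then have "pseudo_mod p b0 = 0"
    using pseudo_mod(2)[OF b0(1), of p] b0_min by fastforce
  with div have "p dvd b0 * q"
    by (metis add.right_neutral dvd_smult dvd_refl)
  moreover have "prime_elem p" using irr by (simp add: prime_elem_iff_irreducible)
  ultimately consider "p dvd b0" | "p dvd q" using prime_elem_dvd_mult_iff by blast
  then show ?thesis
  proof cases
    case 1
    then have "degree p \<le> degree b0" using b0(1) by (rule dvd_imp_degree_le)
    also have "\<dots> \<le> degree b" using b0_min assms(3,4) .
    finally show ?thesis .
  next
    case 2
    then obtain s where "q = p * s" by (elim dvdE)
    have "p \<noteq> 0" using irr by auto
    moreover have "p * [:a:] = p * (b0 * s)"
      using div \<open>pseudo_mod p b0 = 0\<close> \<open>q = p * s\<close> by (simp add: algebra_simps)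
    ultimately have "[:a:] = b0 * s" by (rule mult_left_cancel[THEN iffD1])
    then have "b0 dvd [:a:]" by (rule dvdI)
    then have "degree b0 \<le> degree [:a:]" by (rule dvd_imp_degree_le) (use a in simp)
    then have "degree b0 = 0" by simp
    then obtain c where "b0 = [:c:]" by (metis degree_eq_zeroE)
    then show ?thesis using b0 by (simp add: map_poly_pCons)
  qed
qed

lemma irreducible_root_simple:
  fixes p :: "int poly" and x :: "'a::{idom, ring_char_0}"
  assumes irr: "irreducible p" and root: "poly (map_poly of_int p) x = 0"
  shows "poly (map_poly of_int (pderiv p)) x \<noteq> 0"
proof
  assume deriv_root: "poly (map_poly of_int (pderiv p)) x = 0"
  have "degree p \<noteq> 0"
  proof
    assume "degree p = 0"
    then obtain c where "p = [:c:]" by (metis degree_eq_zeroE)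
    then show False using irr root by (simp add: map_poly_pCons)
  qed
  then have "pderiv p \<noteq> 0" by (simp add: pderiv_eq_0_iff)
  then have "degree p \<le> degree (pderiv p)"
    using irreducible_root_degree_le[OF irr root _ deriv_root] by blast
  then show False using \<open>degree p \<noteq> 0\<close> by (simp add: degree_pderiv)
qed

lemma pisot_conjugate:
  assumes "pisot lam" and "lam \<notin> \<rat>"
  obtains p z where "lead_coeff p = 1" "irreducible p" "poly (map_poly of_int p) lam = 0"
    "poly (map_poly of_int p) z = 0" "cmod z < 1"
proof -
  obtain p :: "int poly" where monic: "lead_coeff p = 1" and irr: "irreducible p"
    and root: "poly (map_poly real_of_int p) lam = 0"
    and conj: "\<And>z. poly (map_poly complex_of_int p) z = 0 \<Longrightarrow> z \<noteq> complex_of_real lam \<Longrightarrow> cmod z < 1"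
    using assms(1) unfolding pisot_def by blast
  have "degree p \<noteq> 0"
  proof
    assume "degree p = 0"
    then show False using monic root by (simp add: poly_altdef degree_map_poly coeff_map_poly)
  qed
  moreover have "degree p \<noteq> 1"
  proof
    assume "degree p = 1"
    then have "lam = - of_int (coeff p 0)"
      using monic root by (simp add: poly_altdef degree_map_poly coeff_map_poly)
    then show False using assms(2) by simp
  qed
  ultimately have deg: "degree p \<ge> 2" by linarith
  define P where "P = map_poly complex_of_int p"
  have P_root: "poly P (of_real lam) = 0"
    unfolding P_def poly_map_poly_of_int_of_real root by simp
  then obtain q where P_eq: "P = [:- of_real lam, 1:] * q"
    by (metis dvdE poly_eq_0_iff_dvd)
  have "degree P = degree p" unfolding P_def by (simp add: degree_map_poly)
  with deg have "q \<noteq> 0" by (auto simp: P_eq)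
  then have "degree P = Suc (degree q)" unfolding P_eq by (subst degree_mult_eq) auto
  with deg \<open>degree P = degree p\<close> have "degree q \<noteq> 0" by simp
  then have "\<not> constant (poly q)" by (simp add: constant_degree)
  then obtain z where z: "poly q z = 0" using fundamental_theorem_of_algebra by blast
  \<comment> \<open>\<open>\<lambda>\<close> is a simple root, so it is not a root of the cofactor \<open>q\<close>\<close>
  have "z \<noteq> of_real lam"
  proof
    assume "z = of_real lam"
    then obtain r where r: "q = [:- of_real lam, 1:] * r"
      using z by (metis dvdE poly_eq_0_iff_dvd)
    have linear_root: "poly [:- of_real lam, 1:] (of_real lam) = (0 :: complex)" by simp
    have "poly (pderiv P) (of_real lam) = 0"
      unfolding P_eq r by (simp only: pderiv_mult poly_add poly_mult linear_root
          mult_zero_left mult_zero_right add_0)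
    then show False
      using irreducible_root_simple[OF irr P_root[unfolded P_def]]
      by (simp add: P_def pderiv_map_poly_of_int)
  qed
  moreover have "poly P z = 0" using P_eq z by simp
  ultimately show ?thesis
    using that monic irr root conj unfolding P_def by blast
qed

lemma rat_common_denominator:
  fixes c :: "nat \<Rightarrow> rat"
  obtains D :: int and d :: "nat \<Rightarrow> int"
  where "D > 0" "\<And>j. j < n \<Longrightarrow> of_int (d j) = of_int D * c j"
proof -
  define num where "num j = fst (quotient_of (c j))" for j
  define den where "den j = snd (quotient_of (c j))" for j
  have den_pos: "den j > 0" for j
    unfolding den_def by (rule quotient_of_denom_pos')
  have c_eq: "c j = of_int (num j) / of_int (den j)" for j
    unfolding num_def den_def by (rule quotient_of_div) simp
  define D where "D = (\<Prod>j<n. den j)"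
  have "of_int (num j * (\<Prod>i\<in>{..<n} - {j}. den i)) = of_int D * c j" if "j < n" for j
  proof -
    have "D = den j * (\<Prod>i\<in>{..<n} - {j}. den i)"
      unfolding D_def using that by (simp add: prod.remove)
    then show ?thesis using den_pos[of j] by (simp add: c_eq field_simps)
  qed
  moreover have "D > 0" unfolding D_def using den_pos by (simp add: prod_pos)
  ultimately show ?thesis
    by (intro that[of D "\<lambda>j. num j * (\<Prod>i\<in>{..<n} - {j}. den i)"])
qed

lemma irreducible_root_powers_rat_independent:
  fixes p :: "int poly" and x :: real and c :: "nat \<Rightarrow> rat"
  assumes irr: "irreducible p" and root: "poly (map_poly of_int p) x = 0"
    and comb: "(\<Sum>j<degree p. of_rat (c j) * x ^ j) = 0"
  shows "\<forall>j<degree p. c j = 0"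
proof (rule ccontr)
  assume "\<not> (\<forall>j<degree p. c j = 0)"
  then obtain j0 where j0: "j0 < degree p" "c j0 \<noteq> 0" by blast
  obtain D d where D: "D > 0" and d: "\<And>j. j < degree p \<Longrightarrow> of_int (d j) = of_int D * c j"
    using rat_common_denominator by metis
  have d_real: "real_of_int (d j) = of_int D * of_rat (c j)" if "j < degree p" for j
    using arg_cong[OF d[OF that], of of_rat] by (simp add: of_rat_mult)
  define b where "b = (\<Sum>j<degree p. monom (d j) j)"
  have coeff_b: "coeff b k = (if k < degree p then d k else 0)" for k
    unfolding b_def by (simp add: coeff_sum)
  have "b \<noteq> 0"
  proof
    assume "b = 0"
    then have "of_int D * c j0 = 0" using coeff_b[of j0] d[of j0] j0 by simp
    then show False using D j0 by simp
  qed
  moreover have "poly (map_poly of_int b) x = 0"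
  proof -
    have "map_poly real_of_int b = (\<Sum>j<degree p. monom (of_int (d j)) j)"
      by (intro poly_eqI) (simp add: coeff_map_poly coeff_b coeff_sum)
    then have "poly (map_poly of_int b) x = (\<Sum>j<degree p. of_int D * (of_rat (c j) * x ^ j))"
      by (simp add: poly_sum poly_monom d_real mult.assoc)
    also have "\<dots> = 0" using comb by (simp add: sum_distrib_left[symmetric])
    finally show ?thesis .
  qed
  moreover have "degree b < degree p"
    using j0 by (intro degree_lessI) (auto simp: coeff_b \<open>b \<noteq> 0\<close>)
  ultimately show False using irreducible_root_degree_le[OF irr root, of b] by linarith
qed

section \<open>An additive eigenmap of the expansion\<close>

lemma additive_scaleR_of_nat:
  fixes h :: "'a::real_vector \<Rightarrow> 'b::real_vector"
  assumes "Modules.additive h"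
  shows "h (of_nat n *\<^sub>R x) = of_nat n *\<^sub>R h x"
  using additive.sum[OF assms, of "\<lambda>_. x" "{..<n}"] by (simp add: sum_constant_scale)

lemma additive_scaleR_of_int:
  fixes h :: "'a::real_vector \<Rightarrow> 'b::real_vector"
  assumes "Modules.additive h"
  shows "h (of_int k *\<^sub>R x) = of_int k *\<^sub>R h x"
proof (cases k rule: int_cases)
  case (nonneg n)
  then show ?thesis using additive_scaleR_of_nat[OF assms] by simp
next
  case (neg n)
  then have k: "(of_int k :: real) = - of_nat (Suc n)" by simp
  show ?thesis
    by (simp only: k scaleR_minus_left additive.minus[OF assms] additive_scaleR_of_nat[OF assms])
qed

lemma additive_extension_rat_independent:
  fixes f :: "nat \<Rightarrow> 'a::real_vector" and g :: "nat \<Rightarrow> real"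
  assumes inj: "inj_on f {..<n}"
    and indep: "\<And>c. (\<Sum>j<n. of_rat (c j) *\<^sub>R f j) = 0 \<Longrightarrow> \<forall>j<n. c j = 0"
  obtains h where "Modules.additive h" "\<And>j. j < n \<Longrightarrow> h (f j) = g j"
proof -
  interpret V: vector_space_pair "\<lambda>r::rat. \<lambda>x::'a. of_rat r *\<^sub>R x" "\<lambda>r::rat. \<lambda>x::real. of_rat r * x"
    by unfold_locales (simp_all add: of_rat_add of_rat_mult algebra_simps)
  define B where "B = f ` {..<n}"
  have "finite B" unfolding B_def by simp
  have "V.vs1.independent B"
    unfolding V.vs1.dependent_finite[OF \<open>finite B\<close>]
  proof (intro notI, elim exE conjE bexE)
    fix c w assume comb: "(\<Sum>v\<in>B. of_rat (c v) *\<^sub>R v) = 0" and "w \<in> B" "c w \<noteq> 0"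
    have "(\<Sum>j<n. of_rat (c (f j)) *\<^sub>R f j) = 0"
      using comb unfolding B_def by (simp add: sum.reindex[OF inj])
    then have "\<forall>j<n. c (f j) = 0" by (rule indep)
    then show False using \<open>w \<in> B\<close> \<open>c w \<noteq> 0\<close> unfolding B_def by blast
  qed
  define h where "h = V.construct B (\<lambda>w. g (the_inv_into {..<n} f w))"
  have "Vector_Spaces.linear (\<lambda>r::rat. \<lambda>x::'a. of_rat r *\<^sub>R x) (\<lambda>r::rat. \<lambda>x::real. of_rat r * x) h"
    unfolding h_def by (rule V.linear_construct[OF \<open>V.vs1.independent B\<close>])
  then have "Modules.additive h" by (intro additive.intro) (rule V.linear_add)
  moreover have "h (f j) = g j" if "j < n" for j
    unfolding h_def using that inj
    by (subst V.construct_basis[OF \<open>V.vs1.independent B\<close>]) (auto simp: B_def the_inv_into_f_f)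
  ultimately show ?thesis using that by blast
qed

lemma additive_eigenmap_of_conjugate:
  fixes p :: "int poly" and lam :: real and z :: complex and h :: "'a::real_vector \<Rightarrow> real"
  assumes root: "poly (map_poly of_int p) lam = 0"
    and factor: "map_poly of_int p = [:- z, 1:] * q"
    and h: "Modules.additive h"
  defines "\<psi> \<equiv> \<lambda>u. \<Sum>j\<le>degree q. coeff q j * of_real (h (lam ^ j *\<^sub>R u))"
  shows "Modules.additive \<psi>" and "\<psi> (lam *\<^sub>R u) = z * \<psi> u"
proof -
  show "Modules.additive \<psi>"
    by (rule additive.intro)
      (simp add: \<psi>_def scaleR_add_right additive.add[OF h] sum.distrib distrib_left)
  define H where "H j = complex_of_real (h (lam ^ j *\<^sub>R u))" for j
  define N where "N = Suc (degree q)"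
  have "degree (map_poly complex_of_int p) \<le> N"
    unfolding factor N_def using degree_mult_le[of "[:- z, 1:]" q] by simp
  then have deg_p: "degree p \<le> N" by (simp add: degree_map_poly)
  have "(\<Sum>j\<le>N. coeff (map_poly of_int p) j * H j) =
      of_real (h (\<Sum>j\<le>N. of_int (coeff p j) *\<^sub>R lam ^ j *\<^sub>R u))"
    by (simp add: H_def coeff_map_poly additive.sum[OF h] additive_scaleR_of_int[OF h]
        del: scaleR_scaleR)
  also have "(\<Sum>j\<le>N. of_int (coeff p j) *\<^sub>R lam ^ j *\<^sub>R u) = poly (map_poly of_int p) lam *\<^sub>R u"
  proof -
    have "degree (map_poly real_of_int p) \<le> N" using deg_p by (simp add: degree_map_poly)
    from arg_cong[OF poly_as_sum_of_monoms'[OF this], of "\<lambda>r. poly r lam"]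
    have "poly (map_poly of_int p) lam = (\<Sum>j\<le>N. of_int (coeff p j) * lam ^ j)"
      by (simp add: poly_sum poly_monom coeff_map_poly)
    then show ?thesis by (simp add: scaleR_sum_left)
  qed
  finally have P_part: "(\<Sum>j\<le>N. coeff (map_poly of_int p) j * H j) = 0"
    using root additive.zero[OF h] by simp
  have q_part: "(\<Sum>j\<le>N. coeff q j * H j) = \<psi> u"
    by (simp add: N_def \<psi>_def H_def coeff_eq_0)
  have "\<psi> (lam *\<^sub>R u) = (\<Sum>j\<le>N. coeff (pCons 0 q) j * H j)"
    by (simp add: N_def \<psi>_def H_def sum.atMost_Suc_shift mult.commute del: sum.atMost_Suc)
  also have "pCons 0 q = map_poly of_int p + smult z q"
    by (simp add: factor algebra_simps)
  also have "(\<Sum>j\<le>N. coeff (map_poly of_int p + smult z q) j * H j) = z * \<psi> u"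
    using P_part q_part by (simp add: distrib_right sum.distrib mult.assoc flip: sum_distrib_left)
  finally show "\<psi> (lam *\<^sub>R u) = z * \<psi> u" .
qed

lemma pisot_conjugate_eigenmap:
  fixes v :: "'a::real_vector"
  assumes pisot: "pisot lam" and irrational: "lam \<notin> \<rat>" and "v \<noteq> 0"
  obtains \<psi> :: "'a \<Rightarrow> complex" and z :: complex
  where "Modules.additive \<psi>" "\<And>x. \<psi> (lam *\<^sub>R x) = z * \<psi> x" "cmod z < 1" "\<psi> v \<noteq> 0"
proof -
  have "lam > 1" using pisot by (simp add: pisot_def)
  obtain p z where monic: "lead_coeff p = 1" and irr: "irreducible p"
    and root: "poly (map_poly of_int p) lam = 0"
    and conj: "poly (map_poly of_int p) z = 0" and small: "cmod z < 1"
    using pisot_conjugate[OF pisot irrational] by blast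
  define n where "n = degree p"
  obtain q where factor: "map_poly of_int p = [:- z, 1:] * q"
    using conj by (metis dvdE poly_eq_0_iff_dvd)
  have "lead_coeff ([:- z, 1:] * q) = lead_coeff q"
    by (simp only: lead_coeff_mult) simp
  moreover have "lead_coeff (map_poly complex_of_int p) = 1"
    using monic by (simp add: degree_map_poly coeff_map_poly)
  ultimately have q_monic: "lead_coeff q = 1" unfolding factor by simp
  then have "q \<noteq> 0" by auto
  have "degree ([:- z, 1:] * q) = Suc (degree q)"
    using \<open>q \<noteq> 0\<close> by (subst degree_mult_eq) auto
  then have "n = Suc (degree q)"
    unfolding n_def factor[symmetric] by (simp add: degree_map_poly)
  define f where "f j = lam ^ j *\<^sub>R v" for j
  have "inj_on f {..<n}"
    using \<open>lam > 1\<close> \<open>v \<noteq> 0\<close> by (auto intro!: inj_onI simp: f_def)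
  moreover have "\<forall>j<n. c j = 0" if "(\<Sum>j<n. of_rat (c j) *\<^sub>R f j) = 0" for c
  proof -
    have "(\<Sum>j<n. of_rat (c j) * lam ^ j) *\<^sub>R v = 0"
      using that by (simp add: f_def scaleR_sum_left)
    then show ?thesis
      using irreducible_root_powers_rat_independent[OF irr root] \<open>v \<noteq> 0\<close> by (simp add: n_def)
  qed
  ultimately obtain h :: "'a \<Rightarrow> real" where h: "Modules.additive h"
    and h_f: "\<And>j. j < n \<Longrightarrow> h (f j) = (if j = degree q then 1 else 0)"
    by (rule additive_extension_rat_independent[where g = "\<lambda>j. if j = degree q then 1 else 0"]) auto
  define \<psi> where "\<psi> u = (\<Sum>j\<le>degree q. coeff q j * of_real (h (lam ^ j *\<^sub>R u)))" for u
  have "\<psi> v = (\<Sum>j\<le>degree q. if j = degree q then coeff q j else 0)"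
    unfolding \<psi>_def f_def[symmetric] using \<open>n = Suc (degree q)\<close> by (intro sum.cong) (auto simp: h_f)
  also have "\<dots> = 1" using q_monic by simp
  finally have "\<psi> v \<noteq> 0" by simp
  with additive_eigenmap_of_conjugate[OF root factor h] small show ?thesis
    using that unfolding \<psi>_def by blast
qed

section \<open>Translates of tiles\<close>

lemma fst_ttrans [simp]: "fst (ttrans X a) = (\<lambda>y. y + a) ` fst X"
  by (simp add: ttrans_def)

lemma ttrans_0 [simp]: "ttrans X 0 = X"
  by (simp add: ttrans_def)

lemma ttrans_ttrans [simp]: "ttrans (ttrans X a) b = ttrans X (a + b)"
  by (simp add: ttrans_def image_image add.assoc)

lemma ttrans_in_ptrans_iff: "ttrans X a \<in> ptrans \<P> b \<longleftrightarrow> ttrans X (a - b) \<in> \<P>"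
proof
  assume "ttrans X a \<in> ptrans \<P> b"
  then obtain Y where "Y \<in> \<P>" "ttrans X a = ttrans Y b" by (auto simp: ptrans_def)
  moreover have "ttrans X (a - b) = ttrans (ttrans X a) (- b)" by simp
  ultimately show "ttrans X (a - b) \<in> \<P>" by simp
next
  assume "ttrans X (a - b) \<in> \<P>"
  then have "ttrans (ttrans X (a - b)) b \<in> ptrans \<P> b" unfolding ptrans_def by (rule imageI)
  then show "ttrans X a \<in> ptrans \<P> b" by simp
qed

lemma interior_translation_right:
  fixes S :: "'a::real_normed_vector set"
  shows "interior ((\<lambda>y. y + a) ` S) = (\<lambda>y. y + a) ` interior S"
proof -
  have "(\<lambda>y. y + a) = (+) a" by (auto simp: add.commute)
  then show ?thesis by (simp only: interior_translation)
qed

lemma inj_ttrans: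
  fixes X :: "('a::euclidean_space, 'l) tile"
  assumes "compact (fst X)" and "fst X \<noteq> {}"
  shows "inj (ttrans X)"
proof (rule injI)
  fix a b assume eq: "ttrans X a = ttrans X b"
  define u where "u = b - a"
  have "ttrans X u = ttrans (ttrans X b) (- a)" by (simp add: u_def)
  also have "\<dots> = X" by (simp flip: eq)
  finally have shift: "y + u \<in> fst X" if "y \<in> fst X" for y
    using that by (metis fst_ttrans imageI)
  \<comment> \<open>a point of \<open>X\<close> maximising \<open>\<langle>-, u\<rangle>\<close> cannot be moved further by \<open>u\<close>\<close>
  have "continuous_on (fst X) (\<lambda>y. y \<bullet> u)" by (intro continuous_intros)
  then obtain y0 where "y0 \<in> fst X" and max: "\<And>y. y \<in> fst X \<Longrightarrow> y \<bullet> u \<le> y0 \<bullet> u"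
    using continuous_attains_sup[OF assms] by blast
  from max[OF shift[OF \<open>y0 \<in> fst X\<close>]] have "u \<bullet> u \<le> 0" by (simp add: inner_add_left)
  then have "u = 0" using inner_gt_zero_iff[of u] by linarith
  then show "a = b" by (simp add: u_def)
qed

lemma uniform_discrete_tile_positions:
  fixes X :: "('a::euclidean_space, 'l) tile"
  assumes patch: "is_patch \<T>" and tile: "is_tile X" and "fst X \<noteq> {}"
  shows "uniform_discrete {s. ttrans X s \<in> \<T>}"
proof -
  have "interior (fst X) \<noteq> {}"
    using tile \<open>fst X \<noteq> {}\<close> unfolding is_tile_def by auto
  then obtain a \<rho> where "\<rho> > 0" and ball: "ball a \<rho> \<subseteq> interior (fst X)"
    using open_contains_ball open_interior by blast
  have in_interior: "w \<in> interior (fst (ttrans X s))" if "dist (w - s) a < \<rho>" for w s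
  proof -
    have "w - s \<in> interior (fst X)" using ball that by (auto simp: dist_commute)
    then have "(w - s) + s \<in> (\<lambda>y. y + s) ` interior (fst X)" by (rule imageI)
    then show ?thesis by (simp add: interior_translation_right)
  qed
  show ?thesis unfolding uniform_discrete_def
  proof (intro exI conjI ballI impI)
    fix s s' assume s: "s \<in> {s. ttrans X s \<in> \<T>}" and s': "s' \<in> {s. ttrans X s \<in> \<T>}"
      and "dist s s' < \<rho>"
    have "a + s \<in> interior (fst (ttrans X s)) \<inter> interior (fst (ttrans X s'))"
      using in_interior[of "a + s" s] in_interior[of "a + s" s'] \<open>\<rho> > 0\<close> \<open>dist s s' < \<rho>\<close>
      by (simp add: dist_norm)
    then have "ttrans X s = ttrans X s'" using patch s s' unfolding is_patch_def by blast
    then show "s = s'"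
      using inj_ttrans[of X] tile \<open>fst X \<noteq> {}\<close> unfolding is_tile_def by (auto dest: injD)
  qed fact
qed

lemma primitive_prototile_nonempty:
  fixes A :: "('a::euclidean_space, 'l) tile set"
  assumes "primitive A \<omega>" and "P \<in> A"
  shows "fst P \<noteq> {}"
proof
  assume "fst P = {}"
  then have fixed: "ttrans P x = P" for x by (cases P) (simp add: ttrans_def)
  \<comment> \<open>so the positions of \<open>P\<close> in \<open>\<omega> Q\<close> are all vectors or none, and \<open>card\<close> gives \<open>0\<close> either way\<close>
  have "infinite (UNIV :: 'a set)"
    using islimpt_UNIV islimpt_finite by blast
  then have "subst_matrix \<omega> P Q = 0" for Q
    unfolding subst_matrix_def fixed by (cases "P \<in> \<omega> Q") auto
  moreover obtain n where "n \<ge> 1" and "mat_pow A (subst_matrix \<omega>) n P P > 0"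
    using assms unfolding primitive_def by blast
  ultimately show False by (cases n) simp_all
qed

section \<open>Control points of a self-similar tiling\<close>

definition control_points :: "('a::euclidean_space, 'l) tile set \<Rightarrow> ('a, 'l) tile set \<Rightarrow> 'a set" where
  "control_points A \<T> = {s. \<exists>P\<in>A. ttrans P s \<in> \<T>}"

definition digits ::
  "('a::euclidean_space, 'l) tile set \<Rightarrow> (('a, 'l) tile \<Rightarrow> ('a, 'l) tile set) \<Rightarrow> 'a set" where
  "digits A \<omega> = {e. \<exists>P\<in>A. \<exists>Q\<in>A. ttrans P e \<in> \<omega> Q}"

lemma subst_ruleD:
  assumes "subst_rule A lam \<omega>"
  shows "finite A" and "\<And>P. P \<in> A \<Longrightarrow> is_tile P" and "\<bar>lam\<bar> > 1"
    and "\<And>P. P \<in> A \<Longrightarrow> finite (\<omega> P)"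
    and "\<And>P. P \<in> A \<Longrightarrow> supp (\<omega> P) = (\<lambda>y. lam *\<^sub>R y) ` fst P"
  using assms unfolding subst_rule_def by blast+

lemma finite_digits:
  assumes "subst_rule A lam \<omega>" and "\<forall>P\<in>A. fst P \<noteq> {}"
  shows "finite (digits A \<omega>)"
proof -
  have "digits A \<omega> = (\<Union>P\<in>A. \<Union>Q\<in>A. ttrans P -` \<omega> Q)"
    unfolding digits_def by blast
  moreover have "finite (ttrans P -` \<omega> Q)" if "P \<in> A" "Q \<in> A" for P Q
    using assms that subst_ruleD[OF assms(1)]
    by (intro finite_vimageI inj_ttrans) (auto simp: is_tile_def)
  moreover have "finite A" using subst_ruleD(1)[OF assms(1)] .
  ultimately show ?thesis by simp
qed

lemma finite_control_points_in_cball: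
  assumes "finite A" and "\<forall>P\<in>A. is_tile P \<and> fst P \<noteq> {}" and "is_patch \<T>"
  shows "finite {s \<in> control_points A \<T>. norm s \<le> R}"
proof -
  have "{s \<in> control_points A \<T>. norm s \<le> R} = (\<Union>P\<in>A. {s. ttrans P s \<in> \<T>} \<inter> cball 0 R)"
    by (auto simp: control_points_def)
  moreover have "finite ({s. ttrans P s \<in> \<T>} \<inter> cball 0 R)" if "P \<in> A" for P
  proof -
    have "uniform_discrete {s. ttrans P s \<in> \<T>}"
      using uniform_discrete_tile_positions[of \<T> P] assms that by blast
    then have "uniform_discrete ({s. ttrans P s \<in> \<T>} \<inter> cball 0 R)"
      by (rule uniform_discrete_subset) blast
    then show ?thesis using uniform_discrete_finite_iff bounded_Int bounded_cball by blast
  qed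
  ultimately show ?thesis using assms(1) by (simp only:) (rule finite_UN_I)
qed

lemma rescaled_norm_bound:
  fixes a b s x :: "'a::real_normed_vector"
  assumes "lam \<noteq> 0" and "a + s = lam *\<^sub>R (x + b)" and "norm a \<le> r" and "norm b \<le> r"
  shows "norm x \<le> (norm s + r) / \<bar>lam\<bar> + r"
proof -
  have "x = inverse lam *\<^sub>R (lam *\<^sub>R (x + b)) - b" using assms(1) by simp
  then have "x = inverse lam *\<^sub>R (a + s) - b" by (simp only: assms(2))
  then have "norm x \<le> norm (a + s) / \<bar>lam\<bar> + norm b"
    using norm_triangle_ineq4[of "inverse lam *\<^sub>R (a + s)" b] by (simp add: divide_inverse_commute)
  also have "\<dots> \<le> (norm s + r) / \<bar>lam\<bar> + r"
    using norm_triangle_ineq[of a s] assms(3,4) by (intro add_mono divide_right_mono) auto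
  finally show ?thesis .
qed

lemma control_point_descent:
  assumes rule: "subst_rule A lam \<omega>" and fixed: "subst_patch A lam \<omega> \<T> = \<T>"
    and nonempty: "\<forall>P\<in>A. fst P \<noteq> {}" and r: "\<forall>P\<in>A. \<forall>y\<in>fst P. norm y \<le> r"
    and "s \<in> control_points A \<T>"
  obtains x where "x \<in> control_points A \<T>" "s - lam *\<^sub>R x \<in> digits A \<omega>"
    "norm x \<le> (norm s + r) / \<bar>lam\<bar> + r"
proof -
  obtain P where "P \<in> A" "ttrans P s \<in> \<T>"
    using assms(5) by (auto simp: control_points_def)
  then have "ttrans P s \<in> subst_patch A lam \<omega> \<T>" using fixed by simp
  then obtain S where "S \<in> \<T>" "ttrans P s \<in> subst_tile A lam \<omega> S"
    unfolding subst_patch_def by blast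
  then obtain Q x where "Q \<in> A" "ttrans Q x \<in> \<T>" "ttrans P s \<in> ptrans (\<omega> Q) (lam *\<^sub>R x)"
    unfolding subst_tile_def by blast
  then have super: "ttrans P (s - lam *\<^sub>R x) \<in> \<omega> Q" by (simp add: ttrans_in_ptrans_iff)
  have "x \<in> control_points A \<T>"
    using \<open>Q \<in> A\<close> \<open>ttrans Q x \<in> \<T>\<close> by (auto simp: control_points_def)
  moreover have "s - lam *\<^sub>R x \<in> digits A \<omega>"
    using \<open>P \<in> A\<close> \<open>Q \<in> A\<close> super by (auto simp: digits_def)
  moreover have "norm x \<le> (norm s + r) / \<bar>lam\<bar> + r"
  proof -
    obtain a where "a \<in> fst P" using nonempty \<open>P \<in> A\<close> by (meson ex_in_conv)
    have "fst (ttrans P (s - lam *\<^sub>R x)) \<subseteq> (\<Union>T\<in>\<omega> Q. fst T)"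
      using super by (rule UN_upper)
    also have "\<dots> \<subseteq> supp (\<omega> Q)" unfolding supp_def by (rule closure_subset)
    also have "supp (\<omega> Q) = (\<lambda>y. lam *\<^sub>R y) ` fst Q"
      using subst_ruleD(5)[OF rule \<open>Q \<in> A\<close>] .
    finally obtain b where "b \<in> fst Q" and "a + (s - lam *\<^sub>R x) = lam *\<^sub>R b"
      using \<open>a \<in> fst P\<close> by auto
    then have "a + s = lam *\<^sub>R (x + b)" by (simp add: algebra_simps)
    moreover have "lam \<noteq> 0" using subst_ruleD(3)[OF rule] by auto
    ultimately show ?thesis
      using rescaled_norm_bound r \<open>P \<in> A\<close> \<open>a \<in> fst P\<close> \<open>Q \<in> A\<close> \<open>b \<in> fst Q\<close> by blast
  qed
  ultimately show ?thesis using that by blast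
qed

lemma bounded_by_norm_descent:
  fixes f :: "'a::real_normed_vector \<Rightarrow> real"
  assumes base: "finite {s \<in> S. norm s \<le> R}" and "0 \<le> c" and "c < 1"
    and descent: "\<And>s. s \<in> S \<Longrightarrow> R < norm s \<Longrightarrow> \<exists>x\<in>S. norm x \<le> norm s - 1 \<and> f s \<le> c * f x + M"
  obtains B where "\<And>s. s \<in> S \<Longrightarrow> f s \<le> B"
proof -
  define B where "B = max (\<Sum>s\<in>{s \<in> S. norm s \<le> R}. \<bar>f s\<bar>) (M / (1 - c))"
  have "M / (1 - c) \<le> B" by (simp add: B_def)
  then have "M \<le> (1 - c) * B"
    using \<open>c < 1\<close> by (simp add: pos_divide_le_eq mult.commute)
  then have step: "c * B + M \<le> B" by (simp add: algebra_simps)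
  have "f s \<le> B" if "s \<in> S" "norm s \<le> real k" for k s
    using that
  proof (induction k arbitrary: s rule: less_induct)
    case (less k)
    show ?case
    proof (cases "norm s \<le> R")
      case True
      then have "\<bar>f s\<bar> \<le> (\<Sum>s\<in>{s \<in> S. norm s \<le> R}. \<bar>f s\<bar>)"
        using base less.prems by (intro member_le_sum) auto
      then show ?thesis unfolding B_def by linarith
    next
      case False
      then have "R < norm s" by simp
      then obtain x where "x \<in> S" "norm x \<le> norm s - 1" and fs: "f s \<le> c * f x + M"
        using descent less.prems(1) by blast
      then have "1 \<le> real k" using less.prems(2) norm_ge_zero[of x] by linarith
      then have "k - 1 < k" by simp
      have "norm x \<le> real (k - 1)"
        using \<open>1 \<le> real k\<close> \<open>norm x \<le> norm s - 1\<close> less.prems(2) by simp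
      with less.IH[OF \<open>k - 1 < k\<close> \<open>x \<in> S\<close>] have "f x \<le> B" .
      then have "f s \<le> c * B + M" using fs \<open>0 \<le> c\<close> by (meson add_right_mono mult_left_mono order_trans)
      with step show ?thesis by linarith
    qed
  qed
  then show ?thesis using that real_nat_ceiling_ge by blast
qed

lemma contraction_margin:
  fixes l r t :: real
  assumes "l > 1" and "(r + l * r + l) / (l - 1) < t"
  shows "(t + r) / l + r \<le> t - 1"
proof -
  have "r + l * r + l < (l - 1) * t" using assms by (simp add: pos_divide_less_eq mult.commute)
  then have "t + r \<le> (t - 1 - r) * l" by (simp add: algebra_simps)
  then have "(t + r) / l \<le> t - 1 - r" using \<open>l > 1\<close> by (subst pos_divide_le_eq) auto
  then show ?thesis by simp
qed

lemma eigenmap_bounded_on_control_points: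
  fixes \<psi> :: "'a::euclidean_space \<Rightarrow> complex"
  assumes rule: "subst_rule A lam \<omega>" and fixed: "subst_patch A lam \<omega> \<T> = \<T>"
    and tiling: "is_tiling \<T>" and nonempty: "\<forall>P\<in>A. fst P \<noteq> {}"
    and \<psi>: "Modules.additive \<psi>" and eigen: "\<And>x. \<psi> (lam *\<^sub>R x) = z * \<psi> x" and "cmod z < 1"
  shows "\<exists>B. \<forall>s\<in>control_points A \<T>. cmod (\<psi> s) \<le> B"
proof -
  have "finite A" and tiles: "\<forall>P\<in>A. is_tile P" and "\<bar>lam\<bar> > 1"
    using subst_ruleD[OF rule] by auto
  have "bounded (\<Union>P\<in>A. fst P)"
    using \<open>finite A\<close> tiles by (auto intro!: compact_imp_bounded simp: is_tile_def)
  then obtain r where r: "\<forall>P\<in>A. \<forall>y\<in>fst P. norm y \<le> r"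
    unfolding bounded_iff by blast
  define R where "R = (r + \<bar>lam\<bar> * r + \<bar>lam\<bar>) / (\<bar>lam\<bar> - 1)"
  define M where "M = (\<Sum>e\<in>digits A \<omega>. cmod (\<psi> e))"
  show ?thesis
  proof (rule bounded_by_norm_descent[where f = "\<lambda>s. cmod (\<psi> s)" and c = "cmod z" and M = M and R = R])
    show "finite {s \<in> control_points A \<T>. norm s \<le> R}"
      using \<open>finite A\<close> tiles nonempty tiling by (intro finite_control_points_in_cball) (auto simp: is_tiling_def)
  next
    fix s assume "s \<in> control_points A \<T>" and "R < norm s"
    then obtain x where "x \<in> control_points A \<T>" and digit: "s - lam *\<^sub>R x \<in> digits A \<omega>"
      and x: "norm x \<le> (norm s + r) / \<bar>lam\<bar> + r"
      using control_point_descent[OF rule fixed nonempty r] by blast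
    with contraction_margin[OF \<open>\<bar>lam\<bar> > 1\<close>] \<open>R < norm s\<close> have "norm x \<le> norm s - 1"
      unfolding R_def by fastforce
    moreover have "cmod (\<psi> s) \<le> cmod z * cmod (\<psi> x) + M"
    proof -
      have "\<psi> s = z * \<psi> x + \<psi> (s - lam *\<^sub>R x)"
        using additive.add[OF \<psi>, of "lam *\<^sub>R x" "s - lam *\<^sub>R x"] by (simp add: eigen)
      also have "cmod \<dots> \<le> cmod z * cmod (\<psi> x) + cmod (\<psi> (s - lam *\<^sub>R x))"
        by (rule order_trans[OF norm_triangle_ineq]) (simp add: norm_mult)
      also have "cmod (\<psi> (s - lam *\<^sub>R x)) \<le> M"
        unfolding M_def using finite_digits[OF rule nonempty] digit by (intro member_le_sum) auto
      finally show ?thesis by simp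
    qed
    ultimately show "\<exists>x\<in>control_points A \<T>. norm x \<le> norm s - 1 \<and> cmod (\<psi> s) \<le> cmod z * cmod (\<psi> x) + M"
      using \<open>x \<in> control_points A \<T>\<close> by blast
  qed (use \<open>cmod z < 1\<close> in auto)
qed

lemma legal_progression_control_points:
  assumes "\<T> \<subseteq> translates_of A" and "X \<in> \<P>"
    and "legal \<T> (\<Union>n\<in>{0..N}. ptrans \<P> (real n *\<^sub>R v))"
  obtains t where "\<And>n. n \<le> N \<Longrightarrow> t + real n *\<^sub>R v \<in> control_points A \<T>"
proof -
  obtain x where x: "ptrans (\<Union>n\<in>{0..N}. ptrans \<P> (real n *\<^sub>R v)) x \<subseteq> \<T>"
    using assms(3) unfolding legal_def by blast
  have in_tiling: "ttrans X (x + real n *\<^sub>R v) \<in> \<T>" if "n \<le> N" for n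
  proof -
    have "ttrans X (real n *\<^sub>R v) \<in> (\<Union>n\<in>{0..N}. ptrans \<P> (real n *\<^sub>R v))"
      using that \<open>X \<in> \<P>\<close> unfolding ptrans_def by auto
    then have "ttrans (ttrans X (real n *\<^sub>R v)) x \<in> \<T>" using x unfolding ptrans_def by blast
    then show ?thesis by (simp add: add.commute)
  qed
  obtain P t where "P \<in> A" "ttrans X x = ttrans P t"
    using in_tiling[of 0] assms(1) unfolding translates_of_def by auto
  then have "ttrans X (x + real n *\<^sub>R v) = ttrans P (t + real n *\<^sub>R v)" for n
    by (metis ttrans_ttrans)
  then show ?thesis
    using that in_tiling \<open>P \<in> A\<close> unfolding control_points_def by fastforce
qed

lemma additive_bounded_progression:
  fixes \<psi> :: "'a::real_vector \<Rightarrow> complex"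
  assumes "Modules.additive \<psi>" and "\<forall>s\<in>S. cmod (\<psi> s) \<le> B"
    and "t \<in> S" and "t + real N *\<^sub>R v \<in> S"
  shows "real N * cmod (\<psi> v) \<le> 2 * B"
proof -
  have "\<psi> (t + real N *\<^sub>R v) - \<psi> t = of_nat N * \<psi> v"
    by (simp add: additive.add[OF assms(1)] additive_scaleR_of_nat[OF assms(1)] scaleR_conv_of_real)
  then have "real N * cmod (\<psi> v) = cmod (\<psi> (t + real N *\<^sub>R v) - \<psi> t)"
    by (simp add: norm_mult)
  also have "\<dots> \<le> cmod (\<psi> (t + real N *\<^sub>R v)) + cmod (\<psi> t)"
    by (rule norm_triangle_ineq4)
  also have "\<dots> \<le> 2 * B"
  proof -
    have "cmod (\<psi> (t + real N *\<^sub>R v)) \<le> B" and "cmod (\<psi> t) \<le> B"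
      using assms(2-4) by blast+
    then show ?thesis by simp
  qed
  finally show ?thesis .
qed

theorem theorem3p1:
  fixes A :: "('a::euclidean_space, 'l::finite) tile set"
    and lam :: real
    and \<omega> :: "('a, 'l) tile \<Rightarrow> ('a, 'l) tile set"
    and \<T> :: "('a, 'l) tile set"
  assumes "subst_rule A lam \<omega>"
    and "primitive A \<omega>"
    and "FLC A lam \<omega>"
    and "pisot lam"
    and "lam \<notin> \<rat>"
    and "is_tiling \<T>"
    and "\<T> \<subseteq> translates_of A"
    and "subst_patch A lam \<omega> \<T> = \<T>"
    and "repetitive \<T>"
  shows "\<forall>\<P> v. finite \<P> \<and> \<P> \<noteq> {} \<and> legal \<T> \<P> \<and> v \<noteq> 0 \<longrightarrow>
           (\<exists>n0::nat. \<not> legal \<T> (\<Union>n\<in>{0..n0}. ptrans \<P> (real n *\<^sub>R v)))"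
proof (intro allI impI, elim conjE)
  fix \<P> :: "('a, 'l) tile set" and v :: 'a
  assume "\<P> \<noteq> {}" and "v \<noteq> 0"
  then obtain X where "X \<in> \<P>" by blast
  obtain \<psi> :: "'a \<Rightarrow> complex" and z where \<psi>: "Modules.additive \<psi>"
    and eigen: "\<And>x. \<psi> (lam *\<^sub>R x) = z * \<psi> x" and "cmod z < 1" and "\<psi> v \<noteq> 0"
    using pisot_conjugate_eigenmap[OF assms(4,5) \<open>v \<noteq> 0\<close>] by metis
  have nonempty: "\<forall>P\<in>A. fst P \<noteq> {}" using primitive_prototile_nonempty[OF assms(2)] by blast
  have "\<exists>B. \<forall>s\<in>control_points A \<T>. cmod (\<psi> s) \<le> B"
    using assms(1,8,6) nonempty \<psi> eigen \<open>cmod z < 1\<close> by (rule eigenmap_bounded_on_control_points)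
  then obtain B where B: "\<forall>s\<in>control_points A \<T>. cmod (\<psi> s) \<le> B" by blast
  obtain N :: nat where N: "2 * B < real N * cmod (\<psi> v)"
    using ex_less_of_nat_mult[of "cmod (\<psi> v)" "2 * B"] \<open>\<psi> v \<noteq> 0\<close> by auto
  show "\<exists>n0::nat. \<not> legal \<T> (\<Union>n\<in>{0..n0}. ptrans \<P> (real n *\<^sub>R v))"
  proof (intro exI notI)
    assume "legal \<T> (\<Union>n\<in>{0..N}. ptrans \<P> (real n *\<^sub>R v))"
    then obtain t where t: "\<And>n. n \<le> N \<Longrightarrow> t + real n *\<^sub>R v \<in> control_points A \<T>"
      using legal_progression_control_points[OF assms(7) \<open>X \<in> \<P>\<close>] by blast
    have "t \<in> control_points A \<T>" using t[of 0] by simp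
    with additive_bounded_progression[OF \<psi> B _ t[of N]] N show False by simp
  qed
qed

end
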